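(* Let $\mathcal{C}$ be a $t$-periodic triangulated category over the finite field $k$, with $t>1$ odd, and let $Z\xrightarrow{l}M\xrightarrow{m}L\xrightarrow{n}Z[1]$ be a triangle in $\mathcal{C}$. Put $n\operatorname{Hom}(Z[1],L)=\{b\in\operatorname{End}L\mid b=ns \text{ for some } s\in\operatorname{Hom}(Z[1],L)\}$ and $\operatorname{Hom}(Z[1],L)n=\{d\in\operatorname{End}Z[1]\mid d=sn \text{ for some } s\in\operatorname{Hom}(Z[1],L)\}$. Then \begin{enumerate} \item $|n\operatorname{Hom}(Z[1],L)|=\Big(\prod_{i=1}^t\frac{|\operatorname{Hom}(M[i],L)|^{(-1)^i}}{|\operatorname{Hom}(Z[i],L)|^{(-1)^i}\,|\operatorname{Hom}(L[i],L)|^{(-1)^i}}\Big)^{1/2}$; \item $|\operatorname{Hom}(Z[1],L)n|=\Big(\prod_{i=1}^t\frac{|\operatorname{Hom}(Z[i],M)|^{(-1)^i}}{|\operatorname{Hom}(Z[i],L)|^{(-1)^i}\,|\operatorname{Hom}(Z[i],Z)|^{(-1)^i}}\Big)^{1/2}$. \end{enumerate}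
   Context: $k$ is a finite field with $q$ elements. A $t$-periodic triangulated category is a $k$-additive triangulated category $\mathcal{C}$ with translation functor $T=[1]$ such that (1) $\operatorname{Hom}(X,Y)$ is a finite-dimensional $k$-vector space for all $X,Y$; (2) $\operatorname{End}X$ is a finite-dimensional local $k$-algebra for every indecomposable $X$; (3) $[1]^t=[t]\cong 1_{\mathcal{C}}$. Composition is written left-to-right: for $f:X\to Y$, $g:Y\to Z$, $fg:X\to Z$ denotes "first $f$, then $g$". $|S|$ denotes the cardinality of a finite set $S$. *)

theory Defs
  imports Complex_Main
begin

text \<open>A k-linear category with a shift endofunctor and a class of distinguished
triangles, given by explicit data. Composition is written left-to-right:
cmp f g means first f, then g.\<close>

record ('o, 'm, 'k) tricat =
  Ob   :: "'o set"
  Hom  :: "'o \<Rightarrow> 'o \<Rightarrow> 'm set"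
  cmp  :: "'m \<Rightarrow> 'm \<Rightarrow> 'm"
  idm  :: "'o \<Rightarrow> 'm"
  add  :: "'m \<Rightarrow> 'm \<Rightarrow> 'm"
  zer  :: "'o \<Rightarrow> 'o \<Rightarrow> 'm"
  neg  :: "'m \<Rightarrow> 'm"
  sm   :: "'k \<Rightarrow> 'm \<Rightarrow> 'm"
  shO  :: "'o \<Rightarrow> 'o"
  shM  :: "'m \<Rightarrow> 'm"
  Dist :: "('o \<times> 'o \<times> 'o \<times> 'm \<times> 'm \<times> 'm) set"

definition category :: "('o, 'm, 'k) tricat \<Rightarrow> bool" where
  "category C \<longleftrightarrow>
     (\<forall>X\<in>Ob C. \<forall>Y\<in>Ob C. \<forall>X'\<in>Ob C. \<forall>Y'\<in>Ob C.
        Hom C X Y \<inter> Hom C X' Y' \<noteq> {} \<longrightarrow> X = X' \<and> Y = Y') \<and>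
     (\<forall>X\<in>Ob C. \<forall>Y\<in>Ob C. \<forall>Z\<in>Ob C. \<forall>f\<in>Hom C X Y. \<forall>g\<in>Hom C Y Z.
        cmp C f g \<in> Hom C X Z) \<and>
     (\<forall>W\<in>Ob C. \<forall>X\<in>Ob C. \<forall>Y\<in>Ob C. \<forall>Z\<in>Ob C.
        \<forall>f\<in>Hom C W X. \<forall>g\<in>Hom C X Y. \<forall>h\<in>Hom C Y Z.
        cmp C (cmp C f g) h = cmp C f (cmp C g h)) \<and>
     (\<forall>X\<in>Ob C. idm C X \<in> Hom C X X) \<and>
     (\<forall>X\<in>Ob C. \<forall>Y\<in>Ob C. \<forall>f\<in>Hom C X Y.
        cmp C (idm C X) f = f \<and> cmp C f (idm C Y) = f)"

fun lincomb :: "('o, 'm, 'k) tricat \<Rightarrow> 'o \<Rightarrow> 'o \<Rightarrow> ('k \<times> 'm) list \<Rightarrow> 'm" where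
  "lincomb C X Y [] = zer C X Y"
| "lincomb C X Y ((a, f) # xs) = add C (sm C a f) (lincomb C X Y xs)"

definition fin_dim_hom :: "('o, 'm, 'k) tricat \<Rightarrow> 'o \<Rightarrow> 'o \<Rightarrow> bool" where
  "fin_dim_hom C X Y \<longleftrightarrow>
     (\<exists>bs. set bs \<subseteq> Hom C X Y \<and>
        (\<forall>f\<in>Hom C X Y. \<exists>cs. length cs = length bs \<and> f = lincomb C X Y (zip cs bs)))"

definition k_linear :: "('o, 'm, 'k::field) tricat \<Rightarrow> bool" where
  "k_linear C \<longleftrightarrow>
     (\<forall>X\<in>Ob C. \<forall>Y\<in>Ob C.
        zer C X Y \<in> Hom C X Y \<and>
        (\<forall>f\<in>Hom C X Y. \<forall>g\<in>Hom C X Y. add C f g \<in> Hom C X Y) \<and>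
        (\<forall>f\<in>Hom C X Y. neg C f \<in> Hom C X Y) \<and>
        (\<forall>a. \<forall>f\<in>Hom C X Y. sm C a f \<in> Hom C X Y) \<and>
        (\<forall>f\<in>Hom C X Y. \<forall>g\<in>Hom C X Y. \<forall>h\<in>Hom C X Y.
            add C (add C f g) h = add C f (add C g h)) \<and>
        (\<forall>f\<in>Hom C X Y. \<forall>g\<in>Hom C X Y. add C f g = add C g f) \<and>
        (\<forall>f\<in>Hom C X Y. add C (zer C X Y) f = f) \<and>
        (\<forall>f\<in>Hom C X Y. add C (neg C f) f = zer C X Y) \<and>
        (\<forall>a. \<forall>f\<in>Hom C X Y. \<forall>g\<in>Hom C X Y.
            sm C a (add C f g) = add C (sm C a f) (sm C a g)) \<and>
        (\<forall>a b. \<forall>f\<in>Hom C X Y. sm C (a + b) f = add C (sm C a f) (sm C b f)) \<and>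
        (\<forall>a b. \<forall>f\<in>Hom C X Y. sm C (a * b) f = sm C a (sm C b f)) \<and>
        (\<forall>f\<in>Hom C X Y. sm C 1 f = f)) \<and>
     (\<forall>X\<in>Ob C. \<forall>Y\<in>Ob C. \<forall>Z\<in>Ob C.
        (\<forall>f\<in>Hom C X Y. \<forall>f'\<in>Hom C X Y. \<forall>g\<in>Hom C Y Z.
            cmp C (add C f f') g = add C (cmp C f g) (cmp C f' g)) \<and>
        (\<forall>f\<in>Hom C X Y. \<forall>g\<in>Hom C Y Z. \<forall>g'\<in>Hom C Y Z.
            cmp C f (add C g g') = add C (cmp C f g) (cmp C f g')) \<and>
        (\<forall>a. \<forall>f\<in>Hom C X Y. \<forall>g\<in>Hom C Y Z.
            cmp C (sm C a f) g = sm C a (cmp C f g) \<and>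
            cmp C f (sm C a g) = sm C a (cmp C f g)))"

definition is_zero_obj :: "('o, 'm, 'k) tricat \<Rightarrow> 'o \<Rightarrow> bool" where
  "is_zero_obj C Z0 \<longleftrightarrow> Z0 \<in> Ob C \<and>
     (\<forall>X\<in>Ob C. Hom C Z0 X = {zer C Z0 X} \<and> Hom C X Z0 = {zer C X Z0})"

definition biprod :: "('o, 'm, 'k) tricat \<Rightarrow> 'o \<Rightarrow> 'o \<Rightarrow> 'o \<Rightarrow> 'm \<Rightarrow> 'm \<Rightarrow> 'm \<Rightarrow> 'm \<Rightarrow> bool" where
  "biprod C X Y S i1 i2 p1 p2 \<longleftrightarrow> S \<in> Ob C \<and>
     i1 \<in> Hom C X S \<and> i2 \<in> Hom C Y S \<and> p1 \<in> Hom C S X \<and> p2 \<in> Hom C S Y \<and>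
     cmp C i1 p1 = idm C X \<and> cmp C i2 p2 = idm C Y \<and>
     cmp C i1 p2 = zer C X Y \<and> cmp C i2 p1 = zer C Y X \<and>
     add C (cmp C p1 i1) (cmp C p2 i2) = idm C S"

definition additive :: "('o, 'm, 'k) tricat \<Rightarrow> bool" where
  "additive C \<longleftrightarrow> (\<exists>Z0. is_zero_obj C Z0) \<and>
     (\<forall>X\<in>Ob C. \<forall>Y\<in>Ob C. \<exists>S i1 i2 p1 p2. biprod C X Y S i1 i2 p1 p2)"

definition iso :: "('o, 'm, 'k) tricat \<Rightarrow> 'm \<Rightarrow> 'o \<Rightarrow> 'o \<Rightarrow> bool" where
  "iso C f X Y \<longleftrightarrow> f \<in> Hom C X Y \<and>
     (\<exists>g\<in>Hom C Y X. cmp C f g = idm C X \<and> cmp C g f = idm C Y)"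

definition shift_functor :: "('o, 'm, 'k) tricat \<Rightarrow> bool" where
  "shift_functor C \<longleftrightarrow>
     (\<forall>X\<in>Ob C. shO C X \<in> Ob C) \<and>
     (\<forall>X\<in>Ob C. \<forall>Y\<in>Ob C. \<forall>f\<in>Hom C X Y. shM C f \<in> Hom C (shO C X) (shO C Y)) \<and>
     (\<forall>X\<in>Ob C. shM C (idm C X) = idm C (shO C X)) \<and>
     (\<forall>X\<in>Ob C. \<forall>Y\<in>Ob C. \<forall>Z\<in>Ob C. \<forall>f\<in>Hom C X Y. \<forall>g\<in>Hom C Y Z.
        shM C (cmp C f g) = cmp C (shM C f) (shM C g)) \<and>
     (\<forall>X\<in>Ob C. \<forall>Y\<in>Ob C. \<forall>f\<in>Hom C X Y. \<forall>g\<in>Hom C X Y.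
        shM C (add C f g) = add C (shM C f) (shM C g)) \<and>
     (\<forall>X\<in>Ob C. \<forall>Y\<in>Ob C. \<forall>a. \<forall>f\<in>Hom C X Y. shM C (sm C a f) = sm C a (shM C f)) \<and>
     (\<forall>X\<in>Ob C. \<forall>Y\<in>Ob C. bij_betw (shM C) (Hom C X Y) (Hom C (shO C X) (shO C Y))) \<and>
     (\<forall>Y\<in>Ob C. \<exists>X\<in>Ob C. \<exists>f. iso C f (shO C X) Y)"

definition triangulated :: "('o, 'm, 'k) tricat \<Rightarrow> bool" where
  "triangulated C \<longleftrightarrow>
     \<comment> \<open>distinguished triangles are triangles\<close>
     (\<forall>(X, Y, Z, f, g, h) \<in> Dist C. X \<in> Ob C \<and> Y \<in> Ob C \<and> Z \<in> Ob C \<and>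
        f \<in> Hom C X Y \<and> g \<in> Hom C Y Z \<and> h \<in> Hom C Z (shO C X)) \<and>
     \<comment> \<open>TR1: closure under isomorphisms of triangles\<close>
     (\<forall>X Y Z f g h X' Y' Z' f' g' h' u v w.
        (X, Y, Z, f, g, h) \<in> Dist C \<and> X' \<in> Ob C \<and> Y' \<in> Ob C \<and> Z' \<in> Ob C \<and>
        f' \<in> Hom C X' Y' \<and> g' \<in> Hom C Y' Z' \<and> h' \<in> Hom C Z' (shO C X') \<and>
        iso C u X X' \<and> iso C v Y Y' \<and> iso C w Z Z' \<and>
        cmp C f v = cmp C u f' \<and> cmp C g w = cmp C v g' \<and>
        cmp C h (shM C u) = cmp C w h'
        \<longrightarrow> (X', Y', Z', f', g', h') \<in> Dist C) \<and>
     \<comment> \<open>TR1: X --1--> X --> 0 --> X[1] is distinguished\<close>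
     (\<forall>X\<in>Ob C. \<forall>Z0. is_zero_obj C Z0 \<longrightarrow>
        (X, X, Z0, idm C X, zer C X Z0, zer C Z0 (shO C X)) \<in> Dist C) \<and>
     \<comment> \<open>TR1: every morphism extends to a distinguished triangle\<close>
     (\<forall>X\<in>Ob C. \<forall>Y\<in>Ob C. \<forall>f\<in>Hom C X Y. \<exists>Z g h. (X, Y, Z, f, g, h) \<in> Dist C) \<and>
     \<comment> \<open>TR2: rotation\<close>
     (\<forall>X Y Z f g h. X \<in> Ob C \<and> Y \<in> Ob C \<and> Z \<in> Ob C \<and>
        f \<in> Hom C X Y \<and> g \<in> Hom C Y Z \<and> h \<in> Hom C Z (shO C X) \<longrightarrow>
        ((X, Y, Z, f, g, h) \<in> Dist C \<longleftrightarrow>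
         (Y, Z, shO C X, g, h, neg C (shM C f)) \<in> Dist C)) \<and>
     \<comment> \<open>TR3: morphisms of triangles\<close>
     (\<forall>X Y Z f g h X' Y' Z' f' g' h' u v.
        (X, Y, Z, f, g, h) \<in> Dist C \<and> (X', Y', Z', f', g', h') \<in> Dist C \<and>
        u \<in> Hom C X X' \<and> v \<in> Hom C Y Y' \<and> cmp C f v = cmp C u f'
        \<longrightarrow> (\<exists>w\<in>Hom C Z Z'. cmp C g w = cmp C v g' \<and>
                cmp C h (shM C u) = cmp C w h')) \<and>
     \<comment> \<open>TR4: octahedral axiom\<close>
     (\<forall>X Y Z u v Z' j k X' l i Y' m n.
        (X, Y, Z', u, j, k) \<in> Dist C \<and> (Y, Z, X', v, l, i) \<in> Dist C \<and>
        (X, Z, Y', cmp C u v, m, n) \<in> Dist C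
        \<longrightarrow> (\<exists>f g. (Z', Y', X', f, g, cmp C i (shM C j)) \<in> Dist C \<and>
                 cmp C j f = cmp C v m \<and> cmp C f n = k \<and> cmp C m g = l \<and>
                 cmp C g i = cmp C n (shM C u)))"

definition is_unit :: "('o, 'm, 'k) tricat \<Rightarrow> 'o \<Rightarrow> 'm \<Rightarrow> bool" where
  "is_unit C X a \<longleftrightarrow> (\<exists>b\<in>Hom C X X. cmp C a b = idm C X \<and> cmp C b a = idm C X)"

definition local_end :: "('o, 'm, 'k) tricat \<Rightarrow> 'o \<Rightarrow> bool" where
  "local_end C X \<longleftrightarrow> idm C X \<noteq> zer C X X \<and>
     (\<forall>a\<in>Hom C X X. \<forall>b\<in>Hom C X X.
        \<not> is_unit C X a \<and> \<not> is_unit C X b \<longrightarrow> \<not> is_unit C X (add C a b))"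

definition indecomposable :: "('o, 'm, 'k) tricat \<Rightarrow> 'o \<Rightarrow> bool" where
  "indecomposable C X \<longleftrightarrow> X \<in> Ob C \<and> \<not> is_zero_obj C X \<and>
     (\<forall>A B i1 i2 p1 p2. A \<in> Ob C \<and> B \<in> Ob C \<and> biprod C A B X i1 i2 p1 p2
        \<longrightarrow> is_zero_obj C A \<or> is_zero_obj C B)"

definition shiftn :: "('o, 'm, 'k) tricat \<Rightarrow> nat \<Rightarrow> 'o \<Rightarrow> 'o" where
  "shiftn C i X = (shO C ^^ i) X"

definition periodic_tricat :: "('o, 'm, 'k::field) tricat \<Rightarrow> nat \<Rightarrow> bool" where
  "periodic_tricat C t \<longleftrightarrow>
     finite (UNIV :: 'k set) \<and>
     category C \<and> k_linear C \<and> additive C \<and> shift_functor C \<and> triangulated C \<and>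
     (\<forall>X\<in>Ob C. \<forall>Y\<in>Ob C. fin_dim_hom C X Y) \<and>
     (\<forall>X. indecomposable C X \<longrightarrow> local_end C X) \<and>
     (\<exists>\<eta>. (\<forall>X\<in>Ob C. iso C (\<eta> X) (shiftn C t X) X) \<and>
        (\<forall>X\<in>Ob C. \<forall>Y\<in>Ob C. \<forall>f\<in>Hom C X Y.
           cmp C (\<eta> X) f = cmp C ((shM C ^^ t) f) (\<eta> Y)))"

end

theory Submission
  imports Defs
begin

text \<open>
  Rotating the triangle Z \<rightarrow> M \<rightarrow> L \<rightarrow> Z[1] gives, for every i,
  distinguished triangles with vertices Z[i], M[i], L[i] and maps l_i, m_i, n_i
  (equal to l[i], m[i], n[i] up to sign).  Applying Hom(-,L) to a distinguished triangle
  X \<rightarrow> Y \<rightarrow> W yields an exact sequence, and since Hom-sets are finite abelian groups,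
  |Hom(Y,L)| = |g Hom(W,L)| \<cdot> |f Hom(Y,L)| (kernel times image).  Writing
  p_i = |n_i Hom(Z[i+1],L)|, every factor of the product in (1) collapses to
  (p_(i-1) p_i)^(-(-1)^i); the product telescopes to p_0 p_t for odd t, and
  t-periodicity gives p_t = p_0.  Part (2) is dual: it uses Hom(Z[1],-), and the
  periodicity Z[i] \<cong> Z[t+i] turns Hom(Z[i],X) into Hom(Z[1],X[t+1-i]).
\<close>

lemma card_eq_card_kernel_mult_card_image:
  fixes G :: "'a set" and p :: "'a \<Rightarrow> 'a \<Rightarrow> 'a" and \<phi> :: "'a \<Rightarrow> 'b"
  assumes fin: "finite G" and zG: "z \<in> G"
    and pG: "\<And>a b. a \<in> G \<Longrightarrow> b \<in> G \<Longrightarrow> p a b \<in> G"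
    and nG: "\<And>a. a \<in> G \<Longrightarrow> ng a \<in> G"
    and assoc: "\<And>a b c. a \<in> G \<Longrightarrow> b \<in> G \<Longrightarrow> c \<in> G \<Longrightarrow> p (p a b) c = p a (p b c)"
    and comm: "\<And>a b. a \<in> G \<Longrightarrow> b \<in> G \<Longrightarrow> p a b = p b a"
    and unit: "\<And>a. a \<in> G \<Longrightarrow> p z a = a"
    and inverse: "\<And>a. a \<in> G \<Longrightarrow> p (ng a) a = z"
    and hom: "\<And>a b. a \<in> G \<Longrightarrow> b \<in> G \<Longrightarrow> \<phi> (p a b) = q (\<phi> a) (\<phi> b)"
  shows "card G = card {a \<in> G. \<phi> a = \<phi> z} * card (\<phi> ` G)"
proof -
  let ?K = "{a \<in> G. \<phi> a = \<phi> z}"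
  let ?F = "\<lambda>b. {a \<in> G. \<phi> a = b}"
  have fibre: "card (?F b) = card ?K" if b: "b \<in> \<phi> ` G" for b
  proof -
    obtain a0 where a0: "a0 \<in> G" "\<phi> a0 = b" using b by auto
    have "\<phi> (p k a0) = b" if "k \<in> ?K" for k
      using that a0 hom[of k a0] hom[of z a0] zG unit by auto
    moreover have "\<phi> (p a (ng a0)) = \<phi> z" if "a \<in> ?F b" for a
      using that a0 nG hom[of a "ng a0"] hom[of a0 "ng a0"] comm[of a0 "ng a0"] inverse
      by auto
    moreover have "p (p k a0) (ng a0) = k" if "k \<in> G" for k
      using that a0 assoc[of k a0 "ng a0"] nG comm[of a0 "ng a0"] inverse comm[of k z] unit zG
      by simp
    moreover have "p (p a (ng a0)) a0 = a" if "a \<in> G" for a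
      using that a0 assoc[of a "ng a0" a0] nG inverse comm[of a z] unit zG by simp
    ultimately have "bij_betw (\<lambda>k. p k a0) ?K (?F b)"
      by (intro bij_betw_byWitness[where f' = "\<lambda>a. p a (ng a0)"]) (auto intro: pG nG a0)
    then show ?thesis by (simp add: bij_betw_same_card)
  qed
  have partition: "G = (\<Union>b\<in>\<phi> ` G. ?F b)" by auto
  have "card G = (\<Sum>b\<in>\<phi> ` G. card (?F b))"
    by (subst partition, rule card_UN_disjoint) (use fin in auto)
  also have "\<dots> = (\<Sum>b\<in>\<phi> ` G. card ?K)" using fibre by simp
  finally show ?thesis by simp
qed

lemma alternating_telescope:
  fixes p :: "nat \<Rightarrow> real"
  assumes pos: "\<And>i. p i > 0"
  shows "(\<Prod>i=1..n. (1 / (p (i - 1) * p i)) powi ((-1)^i)) = p 0 * p n powi (-((-1)^n))"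
proof (induction n)
  case 0
  show ?case using pos[of 0] by simp
next
  case (Suc n)
  have "(\<Prod>i=1..Suc n. (1 / (p (i - 1) * p i)) powi ((-1)^i)) =
        p 0 * p n powi (-((-1)^n)) * (1 / (p n * p (Suc n))) powi (-((-1)^n))"
    using Suc by (simp add: prod.nat_ivl_Suc')
  also have "\<dots> = p 0 * p (Suc n) powi (-((-1)^Suc n))"
    using pos[of n] pos[of "Suc n"]
    by (cases "even n") (simp_all add: power_int_minus field_simps)
  finally show ?case .
qed

lemma sqrt_alternating_ratio_product:
  fixes a b c p q r :: "nat \<Rightarrow> real"
  assumes pos: "\<And>i. p i > 0" "\<And>i. q i > 0" "\<And>i. r i > 0"
    and a: "\<And>j. a (Suc j) = q (Suc j) * r (Suc j)"
    and b: "\<And>j. b (Suc j) = r (Suc j) * p j"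
    and c: "\<And>j. c (Suc j) = p (Suc j) * q (Suc j)"
    and odd: "odd t" and period: "p t = p 0"
  shows "sqrt (\<Prod>i=1..t. a i powi ((-1)^i) / (b i powi ((-1)^i) * c i powi ((-1)^i))) = p 0"
proof -
  have factor: "a i powi e / (b i powi e * c i powi e) = (1 / (p (i - 1) * p i)) powi e"
    if range: "i \<in> {1..t}" for i e
  proof -
    obtain j where i: "i = Suc j" using range by (cases i) auto
    show ?thesis
      using pos[of j] pos(1-3)[of i] unfolding i a b c
      by (simp add: power_int_mult_distrib power_int_divide_distrib field_simps)
  qed
  have "(\<Prod>i=1..t. a i powi ((-1)^i) / (b i powi ((-1)^i) * c i powi ((-1)^i))) =
        (\<Prod>i=1..t. (1 / (p (i - 1) * p i)) powi ((-1)^i))"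
    using factor by (rule prod.cong[OF refl])
  also have "\<dots> = p 0 * p 0"
    using alternating_telescope[of p t] pos(1) odd period by simp
  finally show ?thesis using pos(1)[of 0] by simp
qed

locale periodic_triangulated =
  fixes C :: "('o, 'm, 'k::field) tricat" and t :: nat
  assumes periodic: "periodic_tricat C t"
begin

lemma category: "category C" and linear: "k_linear C" and additive: "additive C"
  and shift: "shift_functor C" and triangulated: "triangulated C"
  and finite_field: "finite (UNIV :: 'k set)"
  and fin_dim: "\<And>X Y. X \<in> Ob C \<Longrightarrow> Y \<in> Ob C \<Longrightarrow> fin_dim_hom C X Y"
  using periodic unfolding periodic_tricat_def by auto

lemma periodicity: "\<exists>\<eta>. (\<forall>X\<in>Ob C. iso C (\<eta> X) (shiftn C t X) X) \<and>
    (\<forall>X\<in>Ob C. \<forall>Y\<in>Ob C. \<forall>f\<in>Hom C X Y. cmp C (\<eta> X) f = cmp C ((shM C ^^ t) f) (\<eta> Y))"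
  using periodic unfolding periodic_tricat_def by auto

lemma cmp_type [intro]: "X \<in> Ob C \<Longrightarrow> Y \<in> Ob C \<Longrightarrow> Z \<in> Ob C \<Longrightarrow>
    f \<in> Hom C X Y \<Longrightarrow> g \<in> Hom C Y Z \<Longrightarrow> cmp C f g \<in> Hom C X Z"
  using category unfolding category_def by blast
lemma cmp_assoc: "W \<in> Ob C \<Longrightarrow> X \<in> Ob C \<Longrightarrow> Y \<in> Ob C \<Longrightarrow> Z \<in> Ob C \<Longrightarrow>
    f \<in> Hom C W X \<Longrightarrow> g \<in> Hom C X Y \<Longrightarrow> h \<in> Hom C Y Z \<Longrightarrow>
    cmp C (cmp C f g) h = cmp C f (cmp C g h)"
  using category unfolding category_def by blast
lemma idm_type [intro]: "X \<in> Ob C \<Longrightarrow> idm C X \<in> Hom C X X"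
  using category unfolding category_def by blast
lemma idm_left: "X \<in> Ob C \<Longrightarrow> Y \<in> Ob C \<Longrightarrow> f \<in> Hom C X Y \<Longrightarrow> cmp C (idm C X) f = f"
  using category unfolding category_def by blast
lemma idm_right: "X \<in> Ob C \<Longrightarrow> Y \<in> Ob C \<Longrightarrow> f \<in> Hom C X Y \<Longrightarrow> cmp C f (idm C Y) = f"
  using category unfolding category_def by blast

lemma hom_group_laws: "X \<in> Ob C \<Longrightarrow> Y \<in> Ob C \<Longrightarrow>
    zer C X Y \<in> Hom C X Y \<and>
    (\<forall>f\<in>Hom C X Y. \<forall>g\<in>Hom C X Y. add C f g \<in> Hom C X Y) \<and>
    (\<forall>f\<in>Hom C X Y. neg C f \<in> Hom C X Y) \<and>
    (\<forall>f\<in>Hom C X Y. \<forall>g\<in>Hom C X Y. \<forall>h\<in>Hom C X Y.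
        add C (add C f g) h = add C f (add C g h)) \<and>
    (\<forall>f\<in>Hom C X Y. \<forall>g\<in>Hom C X Y. add C f g = add C g f) \<and>
    (\<forall>f\<in>Hom C X Y. add C (zer C X Y) f = f) \<and>
    (\<forall>f\<in>Hom C X Y. add C (neg C f) f = zer C X Y)"
  by (drule bspec[OF conjunct1[OF linear[unfolded k_linear_def]]], drule (1) bspec)
    (elim conjE, intro conjI; assumption)

lemma composition_bilinear: "X \<in> Ob C \<Longrightarrow> Y \<in> Ob C \<Longrightarrow> Z \<in> Ob C \<Longrightarrow>
    (\<forall>f\<in>Hom C X Y. \<forall>f'\<in>Hom C X Y. \<forall>g\<in>Hom C Y Z.
        cmp C (add C f f') g = add C (cmp C f g) (cmp C f' g)) \<and>
    (\<forall>f\<in>Hom C X Y. \<forall>g\<in>Hom C Y Z. \<forall>g'\<in>Hom C Y Z.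
        cmp C f (add C g g') = add C (cmp C f g) (cmp C f g'))"
  by (drule bspec[OF conjunct2[OF linear[unfolded k_linear_def]]], drule (1) bspec, drule (1) bspec)
    (elim conjE, intro conjI; assumption)

context
  fixes X Y assumes X: "X \<in> Ob C" and Y: "Y \<in> Ob C"
begin

lemma zer_type [intro]: "zer C X Y \<in> Hom C X Y"
  using hom_group_laws[OF X Y] by blast
lemma add_type [intro]: "f \<in> Hom C X Y \<Longrightarrow> g \<in> Hom C X Y \<Longrightarrow> add C f g \<in> Hom C X Y"
  using hom_group_laws[OF X Y] by blast
lemma neg_type [intro]: "f \<in> Hom C X Y \<Longrightarrow> neg C f \<in> Hom C X Y"
  using hom_group_laws[OF X Y] by blast
lemma add_assoc: "f \<in> Hom C X Y \<Longrightarrow> g \<in> Hom C X Y \<Longrightarrow> h \<in> Hom C X Y \<Longrightarrow>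
    add C (add C f g) h = add C f (add C g h)"
  using hom_group_laws[OF X Y] by blast
lemma add_comm: "f \<in> Hom C X Y \<Longrightarrow> g \<in> Hom C X Y \<Longrightarrow> add C f g = add C g f"
  using hom_group_laws[OF X Y] by blast
lemma add_zer_left: "f \<in> Hom C X Y \<Longrightarrow> add C (zer C X Y) f = f"
  using hom_group_laws[OF X Y] by blast
lemma add_neg_left: "f \<in> Hom C X Y \<Longrightarrow> add C (neg C f) f = zer C X Y"
  using hom_group_laws[OF X Y] by blast

lemma add_zer_right: "f \<in> Hom C X Y \<Longrightarrow> add C f (zer C X Y) = f"
  using add_zer_left add_comm zer_type by metis
lemma add_neg_right: "f \<in> Hom C X Y \<Longrightarrow> add C f (neg C f) = zer C X Y"
  using add_neg_left add_comm neg_type by metis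

lemma idempotent_is_zer: "a \<in> Hom C X Y \<Longrightarrow> add C a a = a \<Longrightarrow> a = zer C X Y"
  by (metis add_assoc add_neg_left add_zer_left neg_type)
lemma neg_unique: "a \<in> Hom C X Y \<Longrightarrow> b \<in> Hom C X Y \<Longrightarrow> add C a b = zer C X Y \<Longrightarrow> a = neg C b"
  by (metis add_assoc add_neg_right add_zer_right add_zer_left neg_type)
lemma neg_neg: "a \<in> Hom C X Y \<Longrightarrow> neg C (neg C a) = a"
  by (metis add_neg_right neg_unique neg_type)
lemma neg_zer: "neg C (zer C X Y) = zer C X Y"
  by (metis add_zer_left neg_unique zer_type)

text \<open>Hom-sets are finite: they are finite-dimensional over a finite field.\<close>
lemma hom_finite: "finite (Hom C X Y)"
proof -
  obtain bs where bs: "\<forall>f\<in>Hom C X Y. \<exists>cs. length cs = length bs \<and> f = lincomb C X Y (zip cs bs)"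
    using fin_dim[OF X Y] unfolding fin_dim_hom_def by blast
  then have "Hom C X Y \<subseteq> (\<lambda>cs. lincomb C X Y (zip cs bs)) ` {cs :: 'k list. length cs = length bs}"
    by blast
  moreover have "finite {cs :: 'k list. length cs = length bs}"
    using finite_lists_length_eq[OF finite_field] by simp
  ultimately show ?thesis using finite_surj by blast
qed

lemma hom_card_pos: "card (Hom C X Y) > 0"
  using hom_finite zer_type card_gt_0_iff by blast

end

context
  fixes X Y Z assumes X: "X \<in> Ob C" and Y: "Y \<in> Ob C" and Z: "Z \<in> Ob C"
begin

lemma cmp_add_right: "f \<in> Hom C X Y \<Longrightarrow> g \<in> Hom C Y Z \<Longrightarrow> g' \<in> Hom C Y Z \<Longrightarrow>
    cmp C f (add C g g') = add C (cmp C f g) (cmp C f g')"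
  using composition_bilinear[OF X Y Z] by blast
lemma cmp_add_left: "f \<in> Hom C X Y \<Longrightarrow> f' \<in> Hom C X Y \<Longrightarrow> g \<in> Hom C Y Z \<Longrightarrow>
    cmp C (add C f f') g = add C (cmp C f g) (cmp C f' g)"
  using composition_bilinear[OF X Y Z] by blast

lemma cmp_zer_right: "f \<in> Hom C X Y \<Longrightarrow> cmp C f (zer C Y Z) = zer C X Z"
proof -
  assume f: "f \<in> Hom C X Y"
  have z: "zer C Y Z \<in> Hom C Y Z" using Y Z ..
  have "cmp C f (zer C Y Z) = cmp C f (add C (zer C Y Z) (zer C Y Z))"
    using add_zer_left[OF Y Z z] by simp
  also have "\<dots> = add C (cmp C f (zer C Y Z)) (cmp C f (zer C Y Z))"
    using cmp_add_right[OF f z z] .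
  finally show ?thesis using idempotent_is_zer[OF X Z] cmp_type[OF X Y Z f z] by metis
qed
lemma cmp_zer_left: "g \<in> Hom C Y Z \<Longrightarrow> cmp C (zer C X Y) g = zer C X Z"
proof -
  assume g: "g \<in> Hom C Y Z"
  have z: "zer C X Y \<in> Hom C X Y" using X Y ..
  have "cmp C (zer C X Y) g = cmp C (add C (zer C X Y) (zer C X Y)) g"
    using add_zer_left[OF X Y z] by simp
  also have "\<dots> = add C (cmp C (zer C X Y) g) (cmp C (zer C X Y) g)"
    using cmp_add_left[OF z z g] .
  finally show ?thesis using idempotent_is_zer[OF X Z] cmp_type[OF X Y Z z g] by metis
qed

lemma cmp_neg_right: "f \<in> Hom C X Y \<Longrightarrow> g \<in> Hom C Y Z \<Longrightarrow> cmp C f (neg C g) = neg C (cmp C f g)"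
proof -
  assume f: "f \<in> Hom C X Y" and g: "g \<in> Hom C Y Z"
  have ng: "neg C g \<in> Hom C Y Z" using Y Z g ..
  have "add C (cmp C f (neg C g)) (cmp C f g) = cmp C f (add C (neg C g) g)"
    using cmp_add_right[OF f ng g] by simp
  also have "\<dots> = zer C X Z" using add_neg_left[OF Y Z g] cmp_zer_right[OF f] by simp
  finally show ?thesis
    using neg_unique[OF X Z] cmp_type[OF X Y Z f g] cmp_type[OF X Y Z f ng] by metis
qed
lemma cmp_neg_left: "f \<in> Hom C X Y \<Longrightarrow> g \<in> Hom C Y Z \<Longrightarrow> cmp C (neg C f) g = neg C (cmp C f g)"
proof -
  assume f: "f \<in> Hom C X Y" and g: "g \<in> Hom C Y Z"
  have nf: "neg C f \<in> Hom C X Y" using X Y f ..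
  have "add C (cmp C (neg C f) g) (cmp C f g) = cmp C (add C (neg C f) f) g"
    using cmp_add_left[OF nf f g] by simp
  also have "\<dots> = zer C X Z" using add_neg_left[OF X Y f] cmp_zer_left[OF g] by simp
  finally show ?thesis
    using neg_unique[OF X Z] cmp_type[OF X Y Z f g] cmp_type[OF X Y Z nf g] by metis
qed

end

lemma shO_Ob [intro]: "X \<in> Ob C \<Longrightarrow> shO C X \<in> Ob C"
  using shift unfolding shift_functor_def by (elim conjE) blast
lemma shM_type [intro]: "X \<in> Ob C \<Longrightarrow> Y \<in> Ob C \<Longrightarrow> f \<in> Hom C X Y \<Longrightarrow>
    shM C f \<in> Hom C (shO C X) (shO C Y)"
  using shift unfolding shift_functor_def by (elim conjE) blast
lemma shM_idm: "X \<in> Ob C \<Longrightarrow> shM C (idm C X) = idm C (shO C X)"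
  using shift unfolding shift_functor_def by (elim conjE) blast
lemma shM_cmp: "X \<in> Ob C \<Longrightarrow> Y \<in> Ob C \<Longrightarrow> Z \<in> Ob C \<Longrightarrow> f \<in> Hom C X Y \<Longrightarrow> g \<in> Hom C Y Z \<Longrightarrow>
    shM C (cmp C f g) = cmp C (shM C f) (shM C g)"
  using shift unfolding shift_functor_def by (elim conjE) blast
lemma shM_add: "X \<in> Ob C \<Longrightarrow> Y \<in> Ob C \<Longrightarrow> f \<in> Hom C X Y \<Longrightarrow> g \<in> Hom C X Y \<Longrightarrow>
    shM C (add C f g) = add C (shM C f) (shM C g)"
  using shift unfolding shift_functor_def by (elim conjE) blast
lemma shM_bij: "X \<in> Ob C \<Longrightarrow> Y \<in> Ob C \<Longrightarrow>
    bij_betw (shM C) (Hom C X Y) (Hom C (shO C X) (shO C Y))"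
  using shift unfolding shift_functor_def by (elim conjE) blast

lemma shM_zer:
  assumes X: "X \<in> Ob C" and Y: "Y \<in> Ob C"
  shows "shM C (zer C X Y) = zer C (shO C X) (shO C Y)"
proof -
  have z: "zer C X Y \<in> Hom C X Y" using X Y ..
  have "shM C (zer C X Y) = add C (shM C (zer C X Y)) (shM C (zer C X Y))"
    using add_zer_left[OF X Y z] shM_add[OF X Y z z] by simp
  then show ?thesis using idempotent_is_zer[OF shO_Ob[OF X] shO_Ob[OF Y]] shM_type[OF X Y z] by metis
qed
lemma shM_neg:
  assumes X: "X \<in> Ob C" and Y: "Y \<in> Ob C" and f: "f \<in> Hom C X Y"
  shows "shM C (neg C f) = neg C (shM C f)"
proof -
  have nf: "neg C f \<in> Hom C X Y" using X Y f ..
  have "add C (shM C (neg C f)) (shM C f) = zer C (shO C X) (shO C Y)"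
    using shM_add[OF X Y nf f] add_neg_left[OF X Y f] shM_zer[OF X Y] by simp
  then show ?thesis
    using neg_unique[OF shO_Ob[OF X] shO_Ob[OF Y]] shM_type[OF X Y f] shM_type[OF X Y nf] by metis
qed

lemma shiftn_Ob [intro]: "X \<in> Ob C \<Longrightarrow> shiftn C i X \<in> Ob C"
  by (induction i) (auto simp: shiftn_def)
lemma shiftn_Suc: "shiftn C (Suc i) X = shO C (shiftn C i X)"
  by (simp add: shiftn_def)
lemma shiftn_add: "shiftn C i (shiftn C j X) = shiftn C (i + j) X"
  by (simp add: shiftn_def funpow_add)

lemma shMn_bij: "X \<in> Ob C \<Longrightarrow> Y \<in> Ob C \<Longrightarrow>
    bij_betw (shM C ^^ j) (Hom C X Y) (Hom C (shiftn C j X) (shiftn C j Y))"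
proof (induction j)
  case 0
  then show ?case by (simp add: shiftn_def bij_betw_id[unfolded id_def])
next
  case (Suc j)
  from bij_betw_trans[OF Suc(1)[OF Suc(2,3)] shM_bij[OF shiftn_Ob[OF Suc(2)] shiftn_Ob[OF Suc(3)]]]
  show ?case by (simp add: shiftn_Suc comp_def)
qed

end

text \<open>
  For f : X \<rightarrow> Y, the set f Hom(Y,L) of all composites "first f, then s", and dually
  Hom(A,X) f.  The two sets in the lemma are n Hom(Z[1],L) and Hom(Z[1],L) n.
\<close>
definition precomp_image :: "('o, 'm, 'k) tricat \<Rightarrow> 'm \<Rightarrow> 'o \<Rightarrow> 'o \<Rightarrow> 'm set" where
  "precomp_image C f Y L = (\<lambda>s. cmp C f s) ` Hom C Y L"

definition postcomp_image :: "('o, 'm, 'k) tricat \<Rightarrow> 'o \<Rightarrow> 'o \<Rightarrow> 'm \<Rightarrow> 'm set" where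
  "postcomp_image C A X f = (\<lambda>s. cmp C s f) ` Hom C A X"

context periodic_triangulated
begin

lemma precomp_image_eq:
  assumes "X \<in> Ob C" "Y \<in> Ob C" "L \<in> Ob C" "f \<in> Hom C X Y"
  shows "precomp_image C f Y L = {b \<in> Hom C X L. \<exists>s\<in>Hom C Y L. b = cmp C f s}"
  unfolding precomp_image_def using cmp_type[OF assms(1-3) assms(4)] by blast

lemma postcomp_image_eq:
  assumes "A \<in> Ob C" "X \<in> Ob C" "Y \<in> Ob C" "f \<in> Hom C X Y"
  shows "postcomp_image C A X f = {d \<in> Hom C A Y. \<exists>s\<in>Hom C A X. d = cmp C s f}"
  unfolding postcomp_image_def using cmp_type[OF assms(1-3) _ assms(4)] by blast

lemma dist_types: "(X, Y, W, f, g, h) \<in> Dist C \<Longrightarrow> X \<in> Ob C \<and> Y \<in> Ob C \<and> W \<in> Ob C \<and>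
    f \<in> Hom C X Y \<and> g \<in> Hom C Y W \<and> h \<in> Hom C W (shO C X)"
  by (drule bspec[OF triangulated[unfolded triangulated_def, THEN conjunct1]]) simp

lemma dist_identity: "is_zero_obj C Z0 \<Longrightarrow> X \<in> Ob C \<Longrightarrow>
    (X, X, Z0, idm C X, zer C X Z0, zer C Z0 (shO C X)) \<in> Dist C"
  using triangulated[unfolded triangulated_def, THEN conjunct2, THEN conjunct2, THEN conjunct1]
  by blast

lemma dist_rotate_iff: "X \<in> Ob C \<Longrightarrow> Y \<in> Ob C \<Longrightarrow> Z \<in> Ob C \<Longrightarrow>
    f \<in> Hom C X Y \<Longrightarrow> g \<in> Hom C Y Z \<Longrightarrow> h \<in> Hom C Z (shO C X) \<Longrightarrow>
    (X, Y, Z, f, g, h) \<in> Dist C \<longleftrightarrow> (Y, Z, shO C X, g, h, neg C (shM C f)) \<in> Dist C"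
  using triangulated[unfolded triangulated_def, THEN conjunct2, THEN conjunct2, THEN conjunct2,
      THEN conjunct2, THEN conjunct1]
  by blast

lemma dist_morphism: "(X, Y, Z, f, g, h) \<in> Dist C \<Longrightarrow> (X', Y', Z', f', g', h') \<in> Dist C \<Longrightarrow>
    u \<in> Hom C X X' \<Longrightarrow> v \<in> Hom C Y Y' \<Longrightarrow> cmp C f v = cmp C u f' \<Longrightarrow>
    \<exists>w\<in>Hom C Z Z'. cmp C g w = cmp C v g' \<and> cmp C h (shM C u) = cmp C w h'"
  using triangulated[unfolded triangulated_def, THEN conjunct2, THEN conjunct2, THEN conjunct2,
      THEN conjunct2, THEN conjunct2, THEN conjunct1]
  by blast

lemma dist_rotate: "(X, Y, W, f, g, h) \<in> Dist C \<Longrightarrow> (Y, W, shO C X, g, h, neg C (shM C f)) \<in> Dist C"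
  using dist_rotate_iff dist_types by blast

lemma zero_exists: "\<exists>Z0. is_zero_obj C Z0"
  using additive unfolding additive_def by blast

lemma zero_Ob: "is_zero_obj C Z0 \<Longrightarrow> Z0 \<in> Ob C"
  unfolding is_zero_obj_def by blast
lemma zero_Hom_from: "is_zero_obj C Z0 \<Longrightarrow> X \<in> Ob C \<Longrightarrow> Hom C Z0 X = {zer C Z0 X}"
  unfolding is_zero_obj_def by blast

text \<open>A zero object stays zero under translation: its only endomorphism is 0 = id.\<close>
lemma zero_shift:
  assumes z: "is_zero_obj C Z0"
  shows "is_zero_obj C (shO C Z0)"
proof -
  have Z: "Z0 \<in> Ob C" using zero_Ob[OF z] .
  have S: "shO C Z0 \<in> Ob C" using Z ..
  have "Hom C (shO C Z0) (shO C Z0) = shM C ` Hom C Z0 Z0"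
    using shM_bij[OF Z Z] unfolding bij_betw_def by simp
  also have "\<dots> = {zer C (shO C Z0) (shO C Z0)}" using zero_Hom_from[OF z Z] shM_zer[OF Z Z] by simp
  finally have id_zero: "idm C (shO C Z0) = zer C (shO C Z0) (shO C Z0)"
    using idm_type[OF S] by blast
  have "a = zer C (shO C Z0) X" if X: "X \<in> Ob C" and a: "a \<in> Hom C (shO C Z0) X" for X a
    using idm_left[OF S X a] cmp_zer_left[OF S S X a] unfolding id_zero by simp
  moreover have "a = zer C X (shO C Z0)" if X: "X \<in> Ob C" and a: "a \<in> Hom C X (shO C Z0)" for X a
    using idm_right[OF X S a] cmp_zer_right[OF X S S a] unfolding id_zero by simp
  ultimately show ?thesis unfolding is_zero_obj_def using S zer_type S by blast
qed

text \<open>The rotation of the TR1 triangle: 0 \<rightarrow> A \<rightarrow> A \<rightarrow> 0[1] is distinguished.\<close>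
lemma dist_zero_identity:
  assumes z: "is_zero_obj C Z0" and A: "A \<in> Ob C"
  shows "(Z0, A, A, zer C Z0 A, idm C A, zer C A (shO C Z0)) \<in> Dist C"
proof -
  have Z: "Z0 \<in> Ob C" using zero_Ob[OF z] .
  have "neg C (shM C (zer C Z0 A)) = zer C (shO C Z0) (shO C A)"
    using shM_zer[OF Z A] neg_zer[OF shO_Ob[OF Z] shO_Ob[OF A]] by simp
  then show ?thesis
    using dist_rotate_iff[OF Z A A zer_type[OF Z A] idm_type[OF A] zer_type[OF A shO_Ob[OF Z]]]
      dist_identity[OF zero_shift[OF z] A]
    by simp
qed

lemma dist_cmp_zero:
  assumes d: "(X, Y, W, f, g, h) \<in> Dist C"
  shows "cmp C f g = zer C X W"
proof -
  obtain Z0 where z: "is_zero_obj C Z0" using zero_exists by blast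
  have T: "X \<in> Ob C" "Y \<in> Ob C" "W \<in> Ob C" "f \<in> Hom C X Y" "g \<in> Hom C Y W"
    using dist_types[OF d] by auto
  have Z: "Z0 \<in> Ob C" using zero_Ob[OF z] .
  obtain w where w: "w \<in> Hom C Z0 W" "cmp C (zer C X Z0) w = cmp C f g"
    using dist_morphism[OF dist_identity[OF z T(1)] d idm_type[OF T(1)] T(4)]
      idm_left[OF T(1) T(2) T(4)] by auto
  have "w = zer C Z0 W" using w(1) zero_Hom_from[OF z T(3)] by simp
  then show ?thesis using w(2) cmp_zer_left[OF T(1) Z T(3) zer_type[OF Z T(3)]] by simp
qed

lemma exact_contravariant:
  assumes d: "(X, Y, W, f, g, h) \<in> Dist C" and L: "L \<in> Ob C"
  shows "{s \<in> Hom C Y L. cmp C f s = zer C X L} = precomp_image C g W L"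
proof (rule set_eqI, rule iffI)
  obtain Z0 where z: "is_zero_obj C Z0" using zero_exists by blast
  have T: "X \<in> Ob C" "Y \<in> Ob C" "W \<in> Ob C" "f \<in> Hom C X Y" "g \<in> Hom C Y W"
    using dist_types[OF d] by auto
  have Z: "Z0 \<in> Ob C" using zero_Ob[OF z] .
  {
    fix s assume "s \<in> {s \<in> Hom C Y L. cmp C f s = zer C X L}"
    then have s: "s \<in> Hom C Y L" "cmp C f s = cmp C (zer C X Z0) (zer C Z0 L)"
      using cmp_zer_left[OF T(1) Z L zer_type[OF Z L]] by auto
    from dist_morphism[OF d dist_zero_identity[OF z L] zer_type[OF T(1) Z] s]
    obtain w where "w \<in> Hom C W L" "cmp C g w = cmp C s (idm C L)" by blast
    then show "s \<in> precomp_image C g W L"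
      unfolding precomp_image_def using idm_right[OF T(2) L s(1)] by auto
  next
    fix s assume "s \<in> precomp_image C g W L"
    then obtain r where r: "r \<in> Hom C W L" "s = cmp C g r"
      unfolding precomp_image_def by blast
    have "cmp C f s = cmp C (cmp C f g) r" using cmp_assoc[OF T(1,2,3) L T(4,5) r(1)] r(2) by simp
    also have "\<dots> = zer C X L" using dist_cmp_zero[OF d] cmp_zer_left[OF T(1,3) L r(1)] by simp
    finally show "s \<in> {s \<in> Hom C Y L. cmp C f s = zer C X L}"
      using r cmp_type[OF T(2,3) L T(5) r(1)] by simp
  }
qed


text \<open>Hom(A,-) is exact: a map A \<rightarrow> Y killed by g factors through f.  The proof rotates
  both the TR1 triangle of A and the given triangle and applies TR3, then undoes the shift.\<close>
lemma exact_covariant: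
  assumes d: "(X, Y, W, f, g, h) \<in> Dist C" and A: "A \<in> Ob C"
  shows "{s \<in> Hom C A Y. cmp C s g = zer C A W} = postcomp_image C A X f"
proof (rule set_eqI, rule iffI)
  obtain Z0 where z: "is_zero_obj C Z0" using zero_exists by blast
  have T: "X \<in> Ob C" "Y \<in> Ob C" "W \<in> Ob C" "f \<in> Hom C X Y" "g \<in> Hom C Y W"
    using dist_types[OF d] by auto
  have Z: "Z0 \<in> Ob C" using zero_Ob[OF z] .
  have SA: "shO C A \<in> Ob C" and SX: "shO C X \<in> Ob C" and SY: "shO C Y \<in> Ob C"
    using A T by auto
  {
    fix s assume "s \<in> {s \<in> Hom C A Y. cmp C s g = zer C A W}"
    then have s: "s \<in> Hom C A Y" "cmp C (zer C A Z0) (zer C Z0 W) = cmp C s g"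
      using cmp_zer_left[OF A Z T(3) zer_type[OF Z T(3)]] by auto
    from dist_morphism[OF dist_rotate[OF dist_identity[OF z A]] dist_rotate[OF d]
        s(1) zer_type[OF Z T(3)] s(2)]
    obtain w where w: "w \<in> Hom C (shO C A) (shO C X)"
      "cmp C (neg C (shM C (idm C A))) (shM C s) = cmp C w (neg C (shM C f))" by blast
    have sf: "shM C f \<in> Hom C (shO C X) (shO C Y)" using T by auto
    have ss: "shM C s \<in> Hom C (shO C A) (shO C Y)" using A T s by auto
    have "neg C (shM C s) = neg C (cmp C w (shM C f))"
      using w(2) shM_idm[OF A] cmp_neg_left[OF SA SA SY idm_type[OF SA] ss] idm_left[OF SA SY ss]
        cmp_neg_right[OF SA SX SY w(1) sf] by simp
    then have shifted: "shM C s = cmp C w (shM C f)"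
      using neg_neg[OF SA SY ss] neg_neg[OF SA SY cmp_type[OF SA SX SY w(1) sf]] by metis
    obtain r where r: "r \<in> Hom C A X" "w = shM C r"
      using w(1) shM_bij[OF A T(1)] unfolding bij_betw_def by blast
    have rf: "cmp C r f \<in> Hom C A Y" using cmp_type[OF A T(1,2) r(1) T(4)] .
    have "shM C s = shM C (cmp C r f)" using shifted r(2) shM_cmp[OF A T(1,2) r(1) T(4)] by simp
    then have "s = cmp C r f"
      using shM_bij[OF A T(2)] s(1) rf unfolding bij_betw_def inj_on_def by blast
    then show "s \<in> postcomp_image C A X f" unfolding postcomp_image_def using r(1) by blast
  next
    fix s assume "s \<in> postcomp_image C A X f"
    then obtain r where r: "r \<in> Hom C A X" "s = cmp C r f"
      unfolding postcomp_image_def by blast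
    have "cmp C s g = cmp C r (cmp C f g)" using cmp_assoc[OF A T(1,2,3) r(1) T(4,5)] r(2) by simp
    also have "\<dots> = zer C A W" using dist_cmp_zero[OF d] cmp_zer_right[OF A T(1,3) r(1)] by simp
    finally show "s \<in> {s \<in> Hom C A Y. cmp C s g = zer C A W}"
      using r cmp_type[OF A T(1,2) r(1) T(4)] by simp
  }
qed

text \<open>
  Counting along a triangle: |Hom(Y,L)| = |g Hom(W,L)| \<cdot> |f Hom(Y,L)|, by the kernel-image
  formula for s \<mapsto> f s and exactness of Hom(-,L).
\<close>
lemma card_hom_contravariant:
  assumes d: "(X, Y, W, f, g, h) \<in> Dist C" and L: "L \<in> Ob C"
  shows "card (Hom C Y L) = card (precomp_image C g W L) * card (precomp_image C f Y L)"
proof -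
  have T: "X \<in> Ob C" "Y \<in> Ob C" "f \<in> Hom C X Y" using dist_types[OF d] by auto
  have "card (Hom C Y L) = card {s \<in> Hom C Y L. cmp C f s = cmp C f (zer C Y L)} *
      card ((\<lambda>s. cmp C f s) ` Hom C Y L)"
    by (rule card_eq_card_kernel_mult_card_image[where p = "add C" and ng = "neg C" and q = "add C",
          OF hom_finite[OF T(2) L] zer_type[OF T(2) L] add_type[OF T(2) L] neg_type[OF T(2) L]
          add_assoc[OF T(2) L] add_comm[OF T(2) L] add_zer_left[OF T(2) L] add_neg_left[OF T(2) L]
          cmp_add_right[OF T(1,2) L T(3)]])
  then show ?thesis
    using cmp_zer_right[OF T(1,2) L T(3)] exact_contravariant[OF d L]
    unfolding precomp_image_def by simp
qed

lemma card_hom_covariant: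
  assumes d: "(X, Y, W, f, g, h) \<in> Dist C" and A: "A \<in> Ob C"
  shows "card (Hom C A Y) = card (postcomp_image C A X f) * card (postcomp_image C A Y g)"
proof -
  have T: "Y \<in> Ob C" "W \<in> Ob C" "g \<in> Hom C Y W" using dist_types[OF d] by auto
  have "card (Hom C A Y) = card {s \<in> Hom C A Y. cmp C s g = cmp C (zer C A Y) g} *
      card ((\<lambda>s. cmp C s g) ` Hom C A Y)"
    by (rule card_eq_card_kernel_mult_card_image[where p = "add C" and ng = "neg C" and q = "add C",
          OF hom_finite[OF A T(1)] zer_type[OF A T(1)] add_type[OF A T(1)] neg_type[OF A T(1)]
          add_assoc[OF A T(1)] add_comm[OF A T(1)] add_zer_left[OF A T(1)] add_neg_left[OF A T(1)]
          cmp_add_left[OF A T(1,2) _ _ T(3)]])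
  then show ?thesis
    using cmp_zer_left[OF A T(1,2) T(3)] exact_covariant[OF d A]
    unfolding postcomp_image_def by simp
qed

lemma precomp_image_neg:
  assumes X: "X \<in> Ob C" and Y: "Y \<in> Ob C" and L: "L \<in> Ob C" and f: "f \<in> Hom C X Y"
  shows "precomp_image C (neg C f) Y L = precomp_image C f Y L"
proof -
  have swap: "cmp C (neg C f) s = cmp C f (neg C s)" if "s \<in> Hom C Y L" for s
    using cmp_neg_left[OF X Y L f that] cmp_neg_right[OF X Y L f that] by simp
  show ?thesis unfolding precomp_image_def
  proof (intro equalityI image_subsetI)
    fix s assume s: "s \<in> Hom C Y L"
    show "cmp C (neg C f) s \<in> (\<lambda>s. cmp C f s) ` Hom C Y L"
      using swap[OF s] neg_type[OF Y L s] by blast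
    show "cmp C f s \<in> (\<lambda>s. cmp C (neg C f) s) ` Hom C Y L"
      using swap[OF neg_type[OF Y L s]] neg_neg[OF Y L s] neg_type[OF Y L s] by (metis image_eqI)
  qed
qed

lemma postcomp_image_neg:
  assumes A: "A \<in> Ob C" and X: "X \<in> Ob C" and Y: "Y \<in> Ob C" and f: "f \<in> Hom C X Y"
  shows "postcomp_image C A X (neg C f) = postcomp_image C A X f"
proof -
  have swap: "cmp C s (neg C f) = cmp C (neg C s) f" if "s \<in> Hom C A X" for s
    using cmp_neg_left[OF A X Y that f] cmp_neg_right[OF A X Y that f] by simp
  show ?thesis unfolding postcomp_image_def
  proof (intro equalityI image_subsetI)
    fix s assume s: "s \<in> Hom C A X"
    show "cmp C s (neg C f) \<in> (\<lambda>s. cmp C s f) ` Hom C A X"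
      using swap[OF s] neg_type[OF A X s] by blast
    show "cmp C s f \<in> (\<lambda>s. cmp C s (neg C f)) ` Hom C A X"
      using swap[OF neg_type[OF A X s]] neg_neg[OF A X s] neg_type[OF A X s] by (metis image_eqI)
  qed
qed


lemma card_precomp_image_iso:
  assumes ob: "X \<in> Ob C" "Y \<in> Ob C" "X' \<in> Ob C" "Y' \<in> Ob C" "L \<in> Ob C"
    and u: "iso C u X' X" and v: "iso C v Y' Y"
    and f: "f \<in> Hom C X Y" and f': "f' \<in> Hom C X' Y'" and square: "cmp C u f = cmp C f' v"
  shows "card (precomp_image C f' Y' L) = card (precomp_image C f Y L)"
proof -
  obtain u' where u': "u' \<in> Hom C X X'" "cmp C u' u = idm C X"
    using u unfolding iso_def by blast
  obtain v' where v': "v' \<in> Hom C Y Y'" "cmp C v v' = idm C Y'"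
    using v unfolding iso_def by blast
  have uT: "u \<in> Hom C X' X" and vT: "v \<in> Hom C Y' Y" using u v unfolding iso_def by auto
  have key: "cmp C u (cmp C f s) = cmp C f' (cmp C v s)" if s: "s \<in> Hom C Y L" for s
    using cmp_assoc[OF ob(3,1,2,5) uT f s] cmp_assoc[OF ob(3,4,2,5) f' vT s] square by simp
  have "(\<lambda>b. cmp C u b) ` precomp_image C f Y L = precomp_image C f' Y' L"
    unfolding precomp_image_def
  proof (intro equalityI image_subsetI subsetI)
    fix b assume "b \<in> (\<lambda>s. cmp C f s) ` Hom C Y L"
    then obtain s where s: "s \<in> Hom C Y L" "b = cmp C f s" by blast
    then show "cmp C u b \<in> (\<lambda>s. cmp C f' s) ` Hom C Y' L"
      using key[OF s(1)] cmp_type[OF ob(4,2,5) vT s(1)] by auto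
  next
    fix s' assume s': "s' \<in> Hom C Y' L"
    have s: "cmp C v' s' \<in> Hom C Y L" using cmp_type[OF ob(2,4,5) v'(1) s'] .
    have "cmp C v (cmp C v' s') = s'"
      using cmp_assoc[OF ob(4,2,4,5) vT v'(1) s'] v'(2) idm_left[OF ob(4,5) s'] by simp
    then have "cmp C f' s' = cmp C u (cmp C f (cmp C v' s'))" using key[OF s] by simp
    then show "cmp C f' s' \<in> (\<lambda>b. cmp C u b) ` (\<lambda>s. cmp C f s) ` Hom C Y L" using s by blast
  qed
  moreover have "inj_on (\<lambda>b. cmp C u b) (precomp_image C f Y L)"
  proof (rule inj_onI)
    fix b b' assume "b \<in> precomp_image C f Y L" "b' \<in> precomp_image C f Y L"
      and eq: "cmp C u b = cmp C u b'"
    then have b: "b \<in> Hom C X L" "b' \<in> Hom C X L"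
      unfolding precomp_image_def using cmp_type[OF ob(1,2,5) f] by auto
    have "cmp C u' (cmp C u b) = cmp C u' (cmp C u b')" using eq by simp
    then show "b = b'"
      using cmp_assoc[OF ob(1,3,1,5) u'(1) uT] b u'(2) idm_left[OF ob(1,5)] by metis
  qed
  ultimately show ?thesis by (metis card_image)
qed

lemma card_postcomp_image_iso:
  assumes ob: "X \<in> Ob C" "Y \<in> Ob C" "X' \<in> Ob C" "Y' \<in> Ob C" "A \<in> Ob C"
    and u: "iso C u X' X" and v: "iso C v Y' Y"
    and f: "f \<in> Hom C X Y" and f': "f' \<in> Hom C X' Y'" and square: "cmp C u f = cmp C f' v"
  shows "card (postcomp_image C A X' f') = card (postcomp_image C A X f)"
proof -
  obtain u' where u': "u' \<in> Hom C X X'" "cmp C u' u = idm C X"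
    using u unfolding iso_def by blast
  obtain v' where v': "v' \<in> Hom C Y Y'" "cmp C v v' = idm C Y'"
    using v unfolding iso_def by blast
  have uT: "u \<in> Hom C X' X" and vT: "v \<in> Hom C Y' Y" using u v unfolding iso_def by auto
  have key: "cmp C (cmp C s f') v = cmp C (cmp C s u) f" if s: "s \<in> Hom C A X'" for s
    using cmp_assoc[OF ob(5,3,4,2) s f' vT] cmp_assoc[OF ob(5,3,1,2) s uT f] square by simp
  have "(\<lambda>d. cmp C d v) ` postcomp_image C A X' f' = postcomp_image C A X f"
    unfolding postcomp_image_def
  proof (intro equalityI image_subsetI subsetI)
    fix d assume "d \<in> (\<lambda>s. cmp C s f') ` Hom C A X'"
    then obtain s where s: "s \<in> Hom C A X'" "d = cmp C s f'" by blast
    then show "cmp C d v \<in> (\<lambda>s. cmp C s f) ` Hom C A X"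
      using key[OF s(1)] cmp_type[OF ob(5,3,1) s(1) uT] by auto
  next
    fix s assume s: "s \<in> Hom C A X"
    have s': "cmp C s u' \<in> Hom C A X'" using cmp_type[OF ob(5,1,3) s u'(1)] .
    have "cmp C (cmp C s u') u = s"
      using cmp_assoc[OF ob(5,1,3,1) s u'(1) uT] u'(2) idm_right[OF ob(5,1) s] by simp
    then have "cmp C s f = cmp C (cmp C (cmp C s u') f') v" using key[OF s'] by simp
    then show "cmp C s f \<in> (\<lambda>d. cmp C d v) ` (\<lambda>s. cmp C s f') ` Hom C A X'" using s' by blast
  qed
  moreover have "inj_on (\<lambda>d. cmp C d v) (postcomp_image C A X' f')"
  proof (rule inj_onI)
    fix d d' assume "d \<in> postcomp_image C A X' f'" "d' \<in> postcomp_image C A X' f'"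
      and eq: "cmp C d v = cmp C d' v"
    then have d: "d \<in> Hom C A Y'" "d' \<in> Hom C A Y'"
      unfolding postcomp_image_def using cmp_type[OF ob(5,3,4) _ f'] by auto
    have "cmp C (cmp C d v) v' = cmp C (cmp C d' v) v'" using eq by simp
    then show "d = d'"
      using cmp_assoc[OF ob(5,4,2,4) _ vT v'(1)] d v'(2) idm_right[OF ob(5,4)] by metis
  qed
  ultimately show ?thesis by (metis card_image)
qed

lemma card_hom_iso_source:
  assumes X: "X \<in> Ob C" and X': "X' \<in> Ob C" and Y: "Y \<in> Ob C" and e: "iso C e X' X"
  shows "card (Hom C X' Y) = card (Hom C X Y)"
proof -
  obtain g where g: "g \<in> Hom C X X'" "cmp C e g = idm C X'" "cmp C g e = idm C X"
    using e unfolding iso_def by blast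
  have eT: "e \<in> Hom C X' X" using e unfolding iso_def by blast
  have "bij_betw (\<lambda>s. cmp C g s) (Hom C X' Y) (Hom C X Y)"
  proof (rule bij_betw_byWitness[where f' = "\<lambda>s. cmp C e s"])
    show "\<forall>a\<in>Hom C X' Y. cmp C e (cmp C g a) = a"
      using cmp_assoc[OF X' X X' Y eT g(1)] g(2) idm_left[OF X' Y] by simp
    show "\<forall>a\<in>Hom C X Y. cmp C g (cmp C e a) = a"
      using cmp_assoc[OF X X' X Y g(1) eT] g(3) idm_left[OF X Y] by simp
  qed (use cmp_type[OF X X' Y g(1)] cmp_type[OF X' X Y eT] in auto)
  then show ?thesis by (rule bij_betw_same_card)
qed


text \<open>Rotation of a triangle replaces a map f by -f[1]; after i rotations one gets \<plusminus>f[i].\<close>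
definition rotated :: "nat \<Rightarrow> 'm \<Rightarrow> 'm" where
  "rotated i f = ((\<lambda>g. neg C (shM C g)) ^^ i) f"

lemma shMn_type:
  "X \<in> Ob C \<Longrightarrow> Y \<in> Ob C \<Longrightarrow> f \<in> Hom C X Y \<Longrightarrow>
    (shM C ^^ i) f \<in> Hom C (shiftn C i X) (shiftn C i Y)"
  using shMn_bij unfolding bij_betw_def by blast

lemma rotated_sign:
  assumes X: "X \<in> Ob C" and Y: "Y \<in> Ob C" and f: "f \<in> Hom C X Y"
  shows "rotated i f = (shM C ^^ i) f \<or> rotated i f = neg C ((shM C ^^ i) f)"
proof (induction i)
  case 0
  show ?case by (simp add: rotated_def)
next
  case (Suc i)
  have F: "(shM C ^^ i) f \<in> Hom C (shiftn C i X) (shiftn C i Y)" using shMn_type[OF X Y f] .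
  have SX: "shiftn C i X \<in> Ob C" and SY: "shiftn C i Y \<in> Ob C" using X Y by auto
  have step: "rotated (Suc i) f = neg C (shM C (rotated i f))" by (simp add: rotated_def)
  from Suc show ?case
  proof
    assume "rotated i f = (shM C ^^ i) f"
    then show ?thesis using step by simp
  next
    assume "rotated i f = neg C ((shM C ^^ i) f)"
    then have "rotated (Suc i) f = neg C (neg C (shM C ((shM C ^^ i) f)))"
      using step shM_neg[OF SX SY F] by simp
    then show ?thesis using neg_neg[OF shO_Ob[OF SX] shO_Ob[OF SY] shM_type[OF SX SY F]] by simp
  qed
qed

lemma precomp_image_rotated:
  assumes X: "X \<in> Ob C" and Y: "Y \<in> Ob C" and L: "L \<in> Ob C" and f: "f \<in> Hom C X Y"
  shows "precomp_image C (rotated i f) (shiftn C i Y) L =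
         precomp_image C ((shM C ^^ i) f) (shiftn C i Y) L"
  using rotated_sign[OF X Y f, of i] precomp_image_neg[OF shiftn_Ob[OF X] shiftn_Ob[OF Y] L shMn_type[OF X Y f, of i]]
  by metis

lemma postcomp_image_rotated:
  assumes X: "X \<in> Ob C" and Y: "Y \<in> Ob C" and A: "A \<in> Ob C" and f: "f \<in> Hom C X Y"
  shows "postcomp_image C A (shiftn C i X) (rotated i f) =
         postcomp_image C A (shiftn C i X) ((shM C ^^ i) f)"
  using rotated_sign[OF X Y f, of i] postcomp_image_neg[OF A shiftn_Ob[OF X] shiftn_Ob[OF Y] shMn_type[OF X Y f, of i]]
  by metis

lemma period_square:
  assumes X: "X \<in> Ob C" and Y: "Y \<in> Ob C" and f: "f \<in> Hom C X Y"
  obtains u v where "iso C u (shiftn C t X) X" "iso C v (shiftn C t Y) Y"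
    "cmp C u f = cmp C ((shM C ^^ t) f) v"
proof -
  obtain \<eta> where "\<forall>X\<in>Ob C. iso C (\<eta> X) (shiftn C t X) X"
    and "\<forall>X\<in>Ob C. \<forall>Y\<in>Ob C. \<forall>f\<in>Hom C X Y. cmp C (\<eta> X) f = cmp C ((shM C ^^ t) f) (\<eta> Y)"
    using periodicity by blast
  then show thesis using that[of "\<eta> X" "\<eta> Y"] X Y f by blast
qed

lemma card_precomp_image_period:
  assumes X: "X \<in> Ob C" and Y: "Y \<in> Ob C" and L: "L \<in> Ob C" and f: "f \<in> Hom C X Y"
  shows "card (precomp_image C (rotated t f) (shiftn C t Y) L) = card (precomp_image C f Y L)"
proof -
  obtain u v where u: "iso C u (shiftn C t X) X" and v: "iso C v (shiftn C t Y) Y"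
    and square: "cmp C u f = cmp C ((shM C ^^ t) f) v"
    using period_square[OF X Y f] .
  show ?thesis
    unfolding precomp_image_rotated[OF X Y L f]
    by (rule card_precomp_image_iso[OF X Y shiftn_Ob[OF X] shiftn_Ob[OF Y] L u v f
          shMn_type[OF X Y f] square])
qed

lemma card_postcomp_image_period:
  assumes X: "X \<in> Ob C" and Y: "Y \<in> Ob C" and A: "A \<in> Ob C" and f: "f \<in> Hom C X Y"
  shows "card (postcomp_image C A (shiftn C t X) (rotated t f)) = card (postcomp_image C A X f)"
proof -
  obtain u v where u: "iso C u (shiftn C t X) X" and v: "iso C v (shiftn C t Y) Y"
    and square: "cmp C u f = cmp C ((shM C ^^ t) f) v"
    using period_square[OF X Y f] .
  show ?thesis
    unfolding postcomp_image_rotated[OF X Y A f]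
    by (rule card_postcomp_image_iso[OF X Y shiftn_Ob[OF X] shiftn_Ob[OF Y] A u v f
          shMn_type[OF X Y f] square])
qed

text \<open>Shifting by t+1-i and using Z[t+1] \<cong> Z[1]: |Hom(Z[i],X)| = |Hom(Z[1],X[t+1-i])|.\<close>
lemma card_hom_shift_transfer:
  assumes Z: "Z \<in> Ob C" and X: "X \<in> Ob C" and i: "1 \<le> i" "i \<le> t"
  shows "card (Hom C (shiftn C i Z) X) = card (Hom C (shiftn C 1 Z) (shiftn C (t + 1 - i) X))"
proof -
  obtain \<eta> where \<eta>: "\<And>X. X \<in> Ob C \<Longrightarrow> iso C (\<eta> X) (shiftn C t X) X"
    using periodicity by blast
  let ?j = "t + 1 - i" and ?A = "shiftn C 1 Z"
  have A: "?A \<in> Ob C" using Z ..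
  have "card (Hom C (shiftn C i Z) X) = card (Hom C (shiftn C ?j (shiftn C i Z)) (shiftn C ?j X))"
    using bij_betw_same_card[OF shMn_bij[OF shiftn_Ob[OF Z] X, of ?j]] .
  also have "shiftn C ?j (shiftn C i Z) = shiftn C t ?A"
    using i by (simp add: shiftn_add)
  also have "card (Hom C (shiftn C t ?A) (shiftn C ?j X)) = card (Hom C ?A (shiftn C ?j X))"
    using card_hom_iso_source[OF A shiftn_Ob[OF A] shiftn_Ob[OF X] \<eta>[OF A]] .
  finally show ?thesis .
qed

end

locale periodic_triangle = periodic_triangulated C t
  for C :: "('o, 'm, 'k::field) tricat" and t +
  fixes Z M L :: 'o and l m n :: 'm
  assumes triangle: "(Z, M, L, l, m, n) \<in> Dist C"
begin

lemma Ob_Z: "Z \<in> Ob C" and Ob_M: "M \<in> Ob C" and Ob_L: "L \<in> Ob C"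
  and n_type: "n \<in> Hom C L (shiftn C 1 Z)"
  using dist_types[OF triangle] by (auto simp: shiftn_def)

text \<open>
  Three rotations turn the triangle into its shift by one (up to the signs recorded
  in rotated), so all rotations of the i-th shifted triangle are distinguished.
\<close>
lemma triangle_shift: "(shiftn C i Z, shiftn C i M, shiftn C i L,
    rotated i l, rotated i m, rotated i n) \<in> Dist C"
proof (induction i)
  case 0
  show ?case using triangle by (simp add: shiftn_def rotated_def)
next
  case (Suc i)
  from dist_rotate[OF dist_rotate[OF dist_rotate[OF Suc]]] show ?case
    by (simp add: shiftn_Suc rotated_def)
qed

lemma triangle_shift_rot1: "(shiftn C i M, shiftn C i L, shiftn C (Suc i) Z,
    rotated i m, rotated i n, rotated (Suc i) l) \<in> Dist C"
  using dist_rotate[OF triangle_shift[of i]] by (simp add: shiftn_Suc rotated_def)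

lemma triangle_shift_rot2: "(shiftn C i L, shiftn C (Suc i) Z, shiftn C (Suc i) M,
    rotated i n, rotated (Suc i) l, rotated (Suc i) m) \<in> Dist C"
  using dist_rotate[OF triangle_shift_rot1[of i]] by (simp add: shiftn_Suc rotated_def)

lemma card_precomp_image_n:
  assumes odd: "odd t"
  shows "real (card (precomp_image C n (shiftn C 1 Z) L)) =
    sqrt (\<Prod>i=1..t.
      real (card (Hom C (shiftn C i M) L)) powi ((-1)^i) /
      (real (card (Hom C (shiftn C i Z) L)) powi ((-1)^i) *
       real (card (Hom C (shiftn C i L) L)) powi ((-1)^i)))"
proof -
  define p where "p i = real (card (precomp_image C (rotated i n) (shiftn C (Suc i) Z) L))" for i
  define q where "q i = real (card (precomp_image C (rotated i m) (shiftn C i L) L))" for i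
  define r where "r i = real (card (precomp_image C (rotated i l) (shiftn C i M) L))" for i
  have M_i: "real (card (Hom C (shiftn C i M) L)) = q i * r i" for i
    using card_hom_contravariant[OF triangle_shift Ob_L] unfolding q_def r_def by simp
  have L_i: "real (card (Hom C (shiftn C i L) L)) = p i * q i" for i
    using card_hom_contravariant[OF triangle_shift_rot1 Ob_L] unfolding p_def q_def by simp
  have Z_i: "real (card (Hom C (shiftn C (Suc i) Z) L)) = r (Suc i) * p i" for i
    using card_hom_contravariant[OF triangle_shift_rot2 Ob_L] unfolding p_def r_def by simp
  have "q i * r i > 0" "p i * q i > 0" for i
    using M_i[of i, symmetric] L_i[of i, symmetric] hom_card_pos[OF shiftn_Ob[OF Ob_M] Ob_L, of i]
      hom_card_pos[OF shiftn_Ob[OF Ob_L] Ob_L, of i] by simp_all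
  moreover have "p i \<ge> 0" "q i \<ge> 0" "r i \<ge> 0" for i
    unfolding p_def q_def r_def by simp_all
  ultimately have pos: "p i > 0" "q i > 0" "r i > 0" for i
    by (metis linorder_not_le mult_nonneg_nonpos mult_nonpos_nonneg)+
  have "p t = p 0"
    using card_precomp_image_period[OF Ob_L shiftn_Ob[OF Ob_Z] Ob_L n_type]
    unfolding p_def by (simp add: shiftn_add rotated_def)
  then show ?thesis
    using sqrt_alternating_ratio_product[where p = p and q = q and r = r
        and a = "\<lambda>i. real (card (Hom C (shiftn C i M) L))"
        and b = "\<lambda>i. real (card (Hom C (shiftn C i Z) L))"
        and c = "\<lambda>i. real (card (Hom C (shiftn C i L) L))", OF pos M_i Z_i L_i odd]
    unfolding p_def by (simp add: rotated_def)
qed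


text \<open>
  Part (2): dually with Hom(Z[1],-).  The substitution j = t+1-i, which preserves the parity
  of the exponent because t is odd, rewrites Hom(Z[i],X) as Hom(Z[1],X[j]).
\<close>
lemma card_postcomp_image_n:
  assumes odd: "odd t"
  shows "real (card (postcomp_image C (shiftn C 1 Z) L n)) =
    sqrt (\<Prod>i=1..t.
      real (card (Hom C (shiftn C i Z) M)) powi ((-1)^i) /
      (real (card (Hom C (shiftn C i Z) L)) powi ((-1)^i) *
       real (card (Hom C (shiftn C i Z) Z)) powi ((-1)^i)))"
proof -
  let ?A = "shiftn C 1 Z"
  have A: "?A \<in> Ob C" using Ob_Z ..
  define p where "p i = real (card (postcomp_image C ?A (shiftn C i L) (rotated i n)))" for i
  define q where "q i = real (card (postcomp_image C ?A (shiftn C i M) (rotated i m)))" for i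
  define r where "r i = real (card (postcomp_image C ?A (shiftn C i Z) (rotated i l)))" for i
  define a where "a j = real (card (Hom C ?A (shiftn C j M)))" for j
  define b where "b j = real (card (Hom C ?A (shiftn C j Z)))" for j
  define c where "c j = real (card (Hom C ?A (shiftn C j L)))" for j
  have M_i: "a i = q i * r i" for i
    using card_hom_covariant[OF triangle_shift A] unfolding a_def q_def r_def by simp
  have L_i: "c i = p i * q i" for i
    using card_hom_covariant[OF triangle_shift_rot1 A] unfolding c_def p_def q_def by simp
  have Z_i: "b (Suc i) = r (Suc i) * p i" for i
    using card_hom_covariant[OF triangle_shift_rot2 A] unfolding b_def p_def r_def by simp
  have "q i * r i > 0" "p i * q i > 0" for i
    using M_i[of i, symmetric] L_i[of i, symmetric] hom_card_pos[OF A shiftn_Ob[OF Ob_M], of i]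
      hom_card_pos[OF A shiftn_Ob[OF Ob_L], of i] unfolding a_def c_def by simp_all
  moreover have "p i \<ge> 0" "q i \<ge> 0" "r i \<ge> 0" for i
    unfolding p_def q_def r_def by simp_all
  ultimately have pos: "p i > 0" "q i > 0" "r i > 0" for i
    by (metis linorder_not_le mult_nonneg_nonpos mult_nonpos_nonneg)+
  have period: "p t = p 0"
    using card_postcomp_image_period[OF Ob_L A A n_type]
    unfolding p_def by (simp add: shiftn_def rotated_def)
  define F where "F j = a j powi ((-1)^j) / (b j powi ((-1)^j) * c j powi ((-1)^j))" for j
  have reflect: "real (card (Hom C (shiftn C i Z) M)) powi ((-1)^i) /
      (real (card (Hom C (shiftn C i Z) L)) powi ((-1)^i) *
       real (card (Hom C (shiftn C i Z) Z)) powi ((-1)^i)) = F (t + 1 - i)"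
    if i: "i \<in> {1..t}" for i
  proof -
    have "even ((t + 1 - i) + i)" using odd i by simp
    then have "((-1::int)^i) = (-1)^(t + 1 - i)"
      by (simp add: minus_one_power_iff)
    then show ?thesis
      using card_hom_shift_transfer[OF Ob_Z Ob_M] card_hom_shift_transfer[OF Ob_Z Ob_L]
        card_hom_shift_transfer[OF Ob_Z Ob_Z] i
      unfolding F_def a_def b_def c_def by (simp add: mult.commute)
  qed
  have "(\<Prod>i=1..t. real (card (Hom C (shiftn C i Z) M)) powi ((-1)^i) /
      (real (card (Hom C (shiftn C i Z) L)) powi ((-1)^i) *
       real (card (Hom C (shiftn C i Z) Z)) powi ((-1)^i))) = (\<Prod>i=1..t. F (t + 1 - i))"
    by (rule prod.cong[OF refl reflect])
  also have "\<dots> = (\<Prod>j=1..t. F j)"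
    by (rule prod.atLeastAtMost_rev[symmetric])
  finally show ?thesis
    using sqrt_alternating_ratio_product[OF pos M_i Z_i L_i odd period]
    unfolding F_def p_def by (simp add: shiftn_def rotated_def)
qed

end

theorem lemma2p2:
  fixes C :: "('o, 'm, 'k::field) tricat" and t :: nat
    and Z M L :: 'o and l m n :: 'm
  assumes "periodic_tricat C t"
    and "t > 1" and "odd t"
    and "(Z, M, L, l, m, n) \<in> Dist C"
  shows "real (card {b \<in> Hom C L L. \<exists>s\<in>Hom C (shiftn C 1 Z) L. b = cmp C n s}) =
           sqrt (\<Prod>i=1..t.
             real (card (Hom C (shiftn C i M) L)) powi ((-1)^i) /
             (real (card (Hom C (shiftn C i Z) L)) powi ((-1)^i) *
              real (card (Hom C (shiftn C i L) L)) powi ((-1)^i)))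
       \<and> real (card {d \<in> Hom C (shiftn C 1 Z) (shiftn C 1 Z).
                      \<exists>s\<in>Hom C (shiftn C 1 Z) L. d = cmp C s n}) =
           sqrt (\<Prod>i=1..t.
             real (card (Hom C (shiftn C i Z) M)) powi ((-1)^i) /
             (real (card (Hom C (shiftn C i Z) L)) powi ((-1)^i) *
              real (card (Hom C (shiftn C i Z) Z)) powi ((-1)^i)))"
proof -
  interpret periodic_triangle C t Z M L l m n
    using assms(1,4) by unfold_locales
  have A: "shiftn C 1 Z \<in> Ob C" using Ob_Z ..
  show ?thesis
    using card_precomp_image_n[OF assms(3)] card_postcomp_image_n[OF assms(3)]
      precomp_image_eq[OF Ob_L A Ob_L n_type] postcomp_image_eq[OF A Ob_L A n_type]
    by simp
qed

end
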